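(* Let $N\ge 1$, let $K^{(1)},\ldots,K^{(N)}$ be positive integers, let $L=\sum_{i=1}^N K^{(i)}$, and let $M\ge 1$. For each $i$, let $P^{(i)}\in\{0,1\}^{K^{(i)}\times M}$ be a row-partial permutation matrix, let $P\in\mathbb{R}^{L\times M}$ be the vertical stacking of $P^{(1)},\ldots,P^{(N)}$, set $Q:=PP^{\top}$ and $C:=-Q$. For $\beta>0$ let $X_\beta$ be the unique solution of the regularized strong SDP $$\min_{X\in\mathbb{R}^{L\times L}}\ \mathrm{Tr}[CX]+\beta^{-1}S(X)\quad\text{subject to}\quad X^{(i,i)}=\mathbf{I}_{K^{(i)}},\ i=1,\ldots,N,\quad X\succeq 0.$$ Then $\lim_{\beta\to\infty}X_\beta=Q$. The same conclusion holds when $X_\beta$ is instead the unique solution of the regularized weak SDP $$\min_{X}\ \mathrm{Tr}[CX]+\beta^{-1}S(X)\quad\text{s.t.}\quad \mathrm{diag}(X)=\mathbf{1}_L,\ \ \mathrm{Tr}\Big[X^{(i,i)}\tfrac{\mathbf{1}_{K^{(i)}}\mathbf{1}_{K^{(i)}}^{\top}}{K^{(i)}}\Big]=1\ (i=1,\ldots,N),\ \ X\succeq 0,$$ or of the regularized GW-type SDP $$\min_{X}\ \mathrm{Tr}[CX]+\beta^{-1}S(X)\quad\text{s.t.}\quad \mathrm{diag}(X)=\mathbf{1}_L,\ \ X\succeq 0.$$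
   Context: A row-partial permutation matrix $P^{(i)}\in\{0,1\}^{K^{(i)}\times M}$ consists of a subset of rows of an $M\times M$ permutation matrix (each row has exactly one $1$, each column at most one $1$). Blocks $X^{(i,j)}\in\mathbb{R}^{K^{(i)}\times K^{(j)}}$ of $X\in\mathbb{R}^{L\times L}$ are indexed conformally with the stacking of the $P^{(i)}$. $\mathbf{1}_n$ denotes the all-ones vector and $\mathbf{I}_n$ the identity. For positive semidefinite $X$, $S(X):=\mathrm{Tr}[X\log X]-\mathrm{Tr}[X]$ (von Neumann entropy functional, with $0\log 0=0$). *)

theory Defs
  imports "Jordan_Normal_Form.Char_Poly" Complex_Main
begin

definition mat_trace :: "real mat \<Rightarrow> real" where
  "mat_trace A = (\<Sum>i<dim_row A. A $$ (i,i))"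

definition row_partial_perm :: "real mat \<Rightarrow> bool" where
  "row_partial_perm A \<longleftrightarrow>
     (\<forall>r < dim_row A. \<forall>c < dim_col A. A $$ (r,c) = 0 \<or> A $$ (r,c) = 1) \<and>
     (\<forall>r < dim_row A. \<exists>!c. c < dim_col A \<and> A $$ (r,c) = 1) \<and>
     (\<forall>c < dim_col A. \<forall>r1 < dim_row A. \<forall>r2 < dim_row A.
        A $$ (r1,c) = 1 \<longrightarrow> A $$ (r2,c) = 1 \<longrightarrow> r1 = r2)"

fun stack_mats :: "(nat \<Rightarrow> real mat) \<Rightarrow> nat \<Rightarrow> nat \<Rightarrow> real mat" where
  "stack_mats Ps M 0 = 0\<^sub>m 0 M"
| "stack_mats Ps M (Suc n) = stack_mats Ps M n @\<^sub>r Ps n"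

definition blk_off :: "(nat \<Rightarrow> nat) \<Rightarrow> nat \<Rightarrow> nat" where
  "blk_off K i = (\<Sum>j<i. K j)"

definition diag_block :: "real mat \<Rightarrow> (nat \<Rightarrow> nat) \<Rightarrow> nat \<Rightarrow> real mat" where
  "diag_block X K i = mat (K i) (K i) (\<lambda>(a,b). X $$ (blk_off K i + a, blk_off K i + b))"

definition psd :: "nat \<Rightarrow> real mat \<Rightarrow> bool" where
  "psd n X \<longleftrightarrow> X \<in> carrier_mat n n \<and> transpose_mat X = X \<and>
     (\<forall>v \<in> carrier_vec n. 0 \<le> v \<bullet> (X *\<^sub>v v))"

text \<open>S(X) = Tr[X log X] - Tr[X], with Tr[X log X] = sum over the eigenvalues
  (roots of the characteristic polynomial, with multiplicity) of lambda log lambda,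
  convention 0 log 0 = 0.\<close>
definition vn_entropy :: "real mat \<Rightarrow> real" where
  "vn_entropy X =
     sum_mset (image_mset (\<lambda>l. if l = 0 then 0 else l * ln l) (proots (char_poly X)))
     - mat_trace X"

definition reg_objective :: "real mat \<Rightarrow> real \<Rightarrow> real mat \<Rightarrow> real" where
  "reg_objective C \<beta> X = mat_trace (C * X) + (1 / \<beta>) * vn_entropy X"

definition strong_feasible :: "nat \<Rightarrow> (nat \<Rightarrow> nat) \<Rightarrow> nat \<Rightarrow> real mat \<Rightarrow> bool" where
  "strong_feasible N K L X \<longleftrightarrow> psd L X \<and> (\<forall>i<N. diag_block X K i = 1\<^sub>m (K i))"

definition weak_feasible :: "nat \<Rightarrow> (nat \<Rightarrow> nat) \<Rightarrow> nat \<Rightarrow> real mat \<Rightarrow> bool" where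
  "weak_feasible N K L X \<longleftrightarrow> psd L X \<and> (\<forall>l<L. X $$ (l,l) = 1) \<and>
     (\<forall>i<N. mat_trace (diag_block X K i *
         ((1 / real (K i)) \<cdot>\<^sub>m mat (K i) (K i) (\<lambda>_. 1))) = 1)"

definition gw_feasible :: "nat \<Rightarrow> real mat \<Rightarrow> bool" where
  "gw_feasible L X \<longleftrightarrow> psd L X \<and> (\<forall>l<L. X $$ (l,l) = 1)"

definition is_minimizer :: "(real mat \<Rightarrow> bool) \<Rightarrow> (real mat \<Rightarrow> real) \<Rightarrow> real mat \<Rightarrow> bool" where
  "is_minimizer F f X \<longleftrightarrow> F X \<and> (\<forall>Y. F Y \<longrightarrow> f X \<le> f Y)"

text \<open>Convergence of a matrix family as beta tends to infinity (entrywise, equivalent to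
  norm convergence in finite dimension).\<close>
definition mat_tendsto_at_top :: "(real \<Rightarrow> real mat) \<Rightarrow> real mat \<Rightarrow> bool" where
  "mat_tendsto_at_top X Q \<longleftrightarrow>
     (\<forall>\<^sub>F \<beta> in at_top. X \<beta> \<in> carrier_mat (dim_row Q) (dim_col Q)) \<and>
     (\<forall>r < dim_row Q. \<forall>c < dim_col Q. ((\<lambda>\<beta>. X \<beta> $$ (r,c)) \<longlongrightarrow> Q $$ (r,c)) at_top)"

end

theory Submission imports Defs "Jordan_Normal_Form.Schur_Decomposition" begin

text \<open>
  Let \<open>cl r\<close> be the point of \<open>{0..<M}\<close> matched by row \<open>r\<close> of the stacked matrix \<open>P\<close>. Then
  \<open>Q = P P\<^sup>T\<close> is the indicator matrix of \<open>cl r = cl s\<close>, and it is feasible for all three problems.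

  For every \<open>\<beta>\<close> the minimizer \<open>X\<close> vanishes outside the classes of \<open>cl\<close>. Indeed, its pinching \<open>Z\<close>
  (the entries between different classes set to \<open>0\<close>) is again feasible with the same linear term,
  so \<open>S(X) \<le> S(Z)\<close>. The eigenvalues of \<open>Z\<close> are doubly stochastic averages of those of \<open>X\<close>, and
  \<open>x ln x - x\<^sup>2 / (2L)\<close> is convex on \<open>[0, L]\<close>, which contains the spectra; Jensen's inequality then
  turns \<open>S(X) \<le> S(Z)\<close> into \<open>\<parallel>X\<parallel>\<^sub>F \<le> \<parallel>Z\<parallel>\<^sub>F\<close>, i.e. \<open>X = Z\<close>.

  Inside the classes, comparing with the feasible point \<open>Q\<close> and using \<open>S(X) \<ge> -L\<close> gives
  \<open>\<Sum> (1 - X\<^sub>a\<^sub>b) \<le> (S(Q) + L) / \<beta>\<close> over all pairs \<open>a, b\<close> in a common class, where every summand is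
  nonnegative because \<open>X\<^sub>a\<^sub>b \<le> 1\<close>.
\<close>

definition orthonormal_mat :: "nat \<Rightarrow> real mat \<Rightarrow> bool" where
  "orthonormal_mat n U \<longleftrightarrow> U \<in> carrier_mat n n \<and> U\<^sup>T * U = 1\<^sub>m n \<and> U * U\<^sup>T = 1\<^sub>m n"

lemma orthonormal_matD:
  assumes "orthonormal_mat n U"
  shows "U \<in> carrier_mat n n" "U\<^sup>T * U = 1\<^sub>m n" "U * U\<^sup>T = 1\<^sub>m n"
  using assms unfolding orthonormal_mat_def by auto

lemma orthonormal_mat_col_sum:
  assumes "orthonormal_mat n U" and "k < n" and "l < n"
  shows "(\<Sum>a<n. U$$(a,k) * U$$(a,l)) = (if k = l then 1 else 0)"
proof -
  have "(U\<^sup>T * U) $$ (k,l) = (\<Sum>a<n. U$$(a,k) * U$$(a,l))"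
    using orthonormal_matD(1)[OF assms(1)] assms(2,3) by (simp add: scalar_prod_def atLeast0LessThan)
  thus ?thesis using orthonormal_matD(2)[OF assms(1)] assms(2,3) by simp
qed

lemma orthonormal_mat_row_sum:
  assumes "orthonormal_mat n U" and "a < n" and "b < n"
  shows "(\<Sum>k<n. U$$(a,k) * U$$(b,k)) = (if a = b then 1 else 0)"
proof -
  have "(U * U\<^sup>T) $$ (a,b) = (\<Sum>k<n. U$$(a,k) * U$$(b,k))"
    using orthonormal_matD(1)[OF assms(1)] assms(2,3) by (simp add: scalar_prod_def atLeast0LessThan)
  thus ?thesis using orthonormal_matD(3)[OF assms(1)] assms(2,3) by simp
qed

lemma orthonormal_mat_of_cols:
  assumes len: "length us = n" and us: "set us \<subseteq> carrier_vec n"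
    and orth: "\<And>i j. i < n \<Longrightarrow> j < n \<Longrightarrow> us!i \<bullet> us!j = (if i = j then 1 else 0)"
  shows "orthonormal_mat n (mat_of_cols n us)"
proof -
  define W where "W = mat_of_cols n us"
  have W: "W \<in> carrier_mat n n" unfolding W_def using len by auto
  have WtW: "W\<^sup>T * W = 1\<^sub>m n"
  proof (rule eq_matI)
    fix i j assume "i < dim_row (1\<^sub>m n)" and "j < dim_col (1\<^sub>m n)"
    hence i: "i < n" and j: "j < n" by auto
    have "us ! i \<in> carrier_vec n" "us ! j \<in> carrier_vec n" using i j len us by auto
    hence "col W i = us ! i" "col W j = us ! j" unfolding W_def using i j len by auto
    moreover have "(W\<^sup>T * W) $$ (i,j) = col W i \<bullet> col W j" using W i j by auto
    ultimately have "(W\<^sup>T * W) $$ (i,j) = us!i \<bullet> us!j" by simp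
    thus "(W\<^sup>T * W) $$ (i,j) = 1\<^sub>m n $$ (i,j)" using orth[OF i j] i j by auto
  qed (use W in auto)
  have "W * W\<^sup>T = 1\<^sub>m n" using mat_mult_left_right_inverse[OF _ W WtW] W by auto
  thus ?thesis using W WtW unfolding orthonormal_mat_def W_def by auto
qed

lemma orthonormal_mat_normalized_cols:
  fixes ws :: "real vec list"
  assumes ws: "set ws \<subseteq> carrier_vec n" "corthogonal ws" "length ws = n"
  shows "orthonormal_mat n (mat_of_cols n (map (\<lambda>w. (1 / sqrt (w \<bullet> w)) \<cdot>\<^sub>v w) ws))"
proof (rule orthonormal_mat_of_cols)
  let ?us = "map (\<lambda>w. (1 / sqrt (w \<bullet> w)) \<cdot>\<^sub>v w) ws"
  show "length ?us = n" and "set ?us \<subseteq> carrier_vec n" using ws by auto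
  have wsi: "ws ! i \<in> carrier_vec n" if "i < n" for i using ws that by auto
  have orth: "(ws!i \<bullet> ws!j = 0) = (i \<noteq> j)" if "i < n" "j < n" for i j
    using ws(2,3) that unfolding corthogonal_def by auto
  have pos: "ws!i \<bullet> ws!i > 0" if i: "i < n" for i
  proof -
    have "ws!i \<bullet> ws!i \<ge> 0" unfolding scalar_prod_def by (auto intro: sum_nonneg)
    thus ?thesis using orth[OF i i] by auto
  qed
  fix i j assume i: "i < n" and j: "j < n"
  have "?us!i \<bullet> ?us!j = (1 / sqrt (ws!i \<bullet> ws!i)) * (1 / sqrt (ws!j \<bullet> ws!j)) * (ws!i \<bullet> ws!j)"
    using i j ws(3) wsi[OF i] wsi[OF j] by (simp add: smult_scalar_prod_distrib scalar_prod_smult_distrib)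
  also have "\<dots> = (if i = j then 1 else 0)"
    using orth[OF i j] pos[OF i] by (cases "i = j") (auto simp: field_simps)
  finally show "?us!i \<bullet> ?us!j = (if i = j then 1 else 0)" .
qed

lemma orthonormal_mat_with_first_col:
  fixes u :: "real vec"
  assumes u: "u \<in> carrier_vec n" and uu: "u \<bullet> u = 1"
  shows "\<exists>W. orthonormal_mat n W \<and> col W 0 = u"
proof -
  have n: "n \<noteq> 0" using u uu by (cases n) (auto simp: scalar_prod_def)
  have u0: "u \<noteq> 0\<^sub>v n" using uu u by auto
  interpret cof_vec_space n "TYPE(real)" .
  define b where "b = basis_completion u"
  define ws where "ws = gram_schmidt n b"
  define W where "W = mat_of_cols n (map (\<lambda>w. (1 / sqrt (w \<bullet> w)) \<cdot>\<^sub>v w) ws)"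
  from basis_completion[OF u u0, folded b_def]
  have dist_b: "distinct b" and indep: "\<not> lin_dep (set b)" and b: "set b \<subseteq> carrier_vec n"
    and hdb: "hd b = u" and len_b: "length b = n" by auto
  from hdb len_b n obtain vs where bv: "b = u # vs" by (cases b) auto
  from gram_schmidt_result[OF b dist_b indep refl, folded ws_def]
  have ws: "set ws \<subseteq> carrier_vec n" "corthogonal ws" "length ws = n" by (auto simp: len_b)
  have "ws ! 0 = u"
    using gram_schmidt_hd[OF u, of vs, folded bv ws_def] ws(3) n by (cases ws) auto
  hence "col W 0 = u" unfolding W_def using ws u uu n by (subst col_mat_of_cols) auto
  thus ?thesis using orthonormal_mat_normalized_cols[OF ws, folded W_def] by blast
qed

lemma complex_eigenvalue_of_real_symmetric_is_real:
  fixes A :: "real mat"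
  assumes A: "A \<in> carrier_mat n n" and sym: "A\<^sup>T = A"
    and ev: "eigenvalue (map_mat complex_of_real A) \<mu>"
  shows "\<mu> \<in> \<real>"
proof -
  define Ac where "Ac = map_mat complex_of_real A"
  have Ac: "Ac \<in> carrier_mat n n" using A unfolding Ac_def by auto
  obtain w where "eigenvector Ac w \<mu>" using ev unfolding eigenvalue_def Ac_def by auto
  hence wc: "w \<in> carrier_vec n" and w0: "w \<noteq> 0\<^sub>v n" and ew: "Ac *\<^sub>v w = \<mu> \<cdot>\<^sub>v w"
    unfolding eigenvector_def using Ac by auto
  define s where "s = (\<Sum>i<n. \<Sum>j<n. cnj (w$i) * complex_of_real (A$$(i,j)) * w$j)"
  define r where "r = (\<Sum>i<n. (cmod (w$i))\<^sup>2)"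
  have "s = (\<Sum>i<n. cnj (w$i) * (Ac *\<^sub>v w)$i)"
    unfolding s_def using A wc
    by (auto simp: Ac_def scalar_prod_def sum_distrib_left mult.assoc intro!: sum.cong)
  also have "\<dots> = \<mu> * (\<Sum>i<n. cnj (w$i) * w$i)" unfolding ew using wc
    by (auto simp: sum_distrib_left intro!: sum.cong)
  also have "(\<Sum>i<n. cnj (w$i) * w$i) = complex_of_real r"
    unfolding r_def of_real_sum by (rule sum.cong[OF refl]) (metis complex_norm_square mult.commute)
  finally have s: "s = \<mu> * complex_of_real r" .
  \<comment> \<open>the quadratic form \<open>w\<^sup>* A w\<close> of a real symmetric matrix is real\<close>
  have "cnj s = (\<Sum>i<n. \<Sum>j<n. w$i * complex_of_real (A$$(i,j)) * cnj (w$j))"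
    unfolding s_def by (simp add: cnj_sum)
  also have "\<dots> = (\<Sum>j<n. \<Sum>i<n. w$i * complex_of_real (A$$(i,j)) * cnj (w$j))"
    by (rule sum.swap)
  also have "\<dots> = s" unfolding s_def
  proof (intro sum.cong refl)
    fix i j assume "i \<in> {..<n}" "j \<in> {..<n}"
    hence "A$$(i,j) = A$$(j,i)" using A sym by (metis carrier_matD index_transpose_mat(1) lessThan_iff)
    thus "w$j * complex_of_real (A$$(j,i)) * cnj (w$i) = cnj (w$i) * complex_of_real (A$$(i,j)) * w$j"
      by (simp add: ac_simps)
  qed
  finally have "Im s = 0" by (metis Reals_cnj_iff complex_is_Real_iff)
  obtain i where i: "i < n" "w$i \<noteq> 0" using w0 wc by (metis carrier_vecD eq_vecI index_zero_vec)
  have "r > 0" unfolding r_def using i by (intro sum_pos2[of _ i]) auto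
  moreover have "Im s = Im \<mu> * r" unfolding s by simp
  ultimately show ?thesis using \<open>Im s = 0\<close> complex_is_Real_iff by auto
qed

lemma real_symmetric_unit_eigenvector:
  fixes A :: "real mat"
  assumes A: "A \<in> carrier_mat n n" and sym: "A\<^sup>T = A" and n: "n > 0"
  shows "\<exists>l u. u \<in> carrier_vec n \<and> u \<bullet> u = 1 \<and> A *\<^sub>v u = l \<cdot>\<^sub>v u"
proof -
  define Ac where "Ac = map_mat complex_of_real A"
  have Ac: "Ac \<in> carrier_mat n n" using A unfolding Ac_def by auto
  obtain as where cp: "char_poly Ac = (\<Prod>a\<leftarrow>as. [:- a, 1:])" and len: "length as = n"
    using char_poly_factorized[OF Ac] by blast
  have root: "poly (\<Prod>a\<leftarrow>as. [:- a, 1:]) x = 0" if "x \<in> set as" for x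
    using that by (induct as) auto
  have "poly (char_poly Ac) (as ! 0) = 0" unfolding cp using len n by (intro root) auto
  hence "eigenvalue Ac (as ! 0)" using eigenvalue_root_char_poly[OF Ac] by auto
  then obtain l where l: "as ! 0 = complex_of_real l"
    using complex_eigenvalue_of_real_symmetric_is_real[OF A sym] Reals_cases unfolding Ac_def by metis
  have "poly (char_poly Ac) (complex_of_real l) = 0" using \<open>poly (char_poly Ac) (as ! 0) = 0\<close> l by simp
  hence "poly (char_poly A) l = 0" unfolding Ac_def of_real_hom.char_poly_hom[OF A] by simp
  hence "eigenvalue A l" using eigenvalue_root_char_poly[OF A] by auto
  then obtain v where "eigenvector A v l" unfolding eigenvalue_def by auto
  hence v: "v \<in> carrier_vec n" "v \<noteq> 0\<^sub>v n" "A *\<^sub>v v = l \<cdot>\<^sub>v v" unfolding eigenvector_def using A by auto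
  have "v \<bullet> v > 0"
  proof -
    obtain i where "i < n" "v$i \<noteq> 0" using v(1,2) by (metis carrier_vecD eq_vecI index_zero_vec)
    thus ?thesis using v(1) unfolding scalar_prod_def
      by (intro sum_pos2[of _ i]) (auto simp: zero_less_mult_iff linorder_neq_iff)
  qed
  define u where "u = (1 / sqrt (v \<bullet> v)) \<cdot>\<^sub>v v"
  have "u \<in> carrier_vec n" unfolding u_def using v by auto
  moreover have "u \<bullet> u = 1" unfolding u_def using v(1) \<open>v \<bullet> v > 0\<close>
    by (simp add: smult_scalar_prod_distrib scalar_prod_smult_distrib)
  moreover have "A *\<^sub>v u = l \<cdot>\<^sub>v u" unfolding u_def using v A
    by (simp add: mult_mat_vec smult_smult_assoc mult.commute)
  ultimately show ?thesis by blast
qed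

lemma orthonormal_mat_mult:
  assumes W: "orthonormal_mat n W" and B: "orthonormal_mat n B"
  shows "orthonormal_mat n (W * B)"
proof -
  note Wc = orthonormal_matD[OF W] and Bc = orthonormal_matD[OF B]
  have Wt: "W\<^sup>T \<in> carrier_mat n n" and Bt: "B\<^sup>T \<in> carrier_mat n n" using Wc Bc by auto
  have T: "(W * B)\<^sup>T = B\<^sup>T * W\<^sup>T" using transpose_mult[of W n n B n] Wc Bc by simp
  have "B\<^sup>T * W\<^sup>T * (W * B) = B\<^sup>T * (W\<^sup>T * W) * B"
    using Wt Bt Wc(1) Bc(1) by (simp add: assoc_mult_mat[of _ n n _ n _ n])
  hence 1: "(W * B)\<^sup>T * (W * B) = 1\<^sub>m n" unfolding T using Wc Bc Bt by simp
  have "W * B * (B\<^sup>T * W\<^sup>T) = W * (B * B\<^sup>T) * W\<^sup>T"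
    using Wt Bt Wc(1) Bc(1) by (simp add: assoc_mult_mat[of _ n n _ n _ n])
  hence 2: "(W * B) * (W * B)\<^sup>T = 1\<^sub>m n" unfolding T using Wc Bc Wt by simp
  show ?thesis unfolding orthonormal_mat_def using 1 2 Wc Bc by auto
qed

lemma orthonormal_mat_one_block:
  assumes U: "orthonormal_mat n U"
  shows "orthonormal_mat (Suc n) (four_block_mat (1\<^sub>m 1) (0\<^sub>m 1 n) (0\<^sub>m n 1) U)"
proof -
  note Uc = orthonormal_matD[OF U]
  define B where "B = four_block_mat (1\<^sub>m 1) (0\<^sub>m 1 n) (0\<^sub>m n 1) U"
  have Bc: "B \<in> carrier_mat (Suc n) (Suc n)" unfolding B_def using Uc by auto
  have Bt: "B\<^sup>T = four_block_mat (1\<^sub>m 1) (0\<^sub>m 1 n) (0\<^sub>m n 1) U\<^sup>T"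
    unfolding B_def by (subst transpose_four_block_mat[of _ 1 1 _ n _ n]) (use Uc in auto)
  have "B\<^sup>T * B = four_block_mat (1\<^sub>m 1 * 1\<^sub>m 1 + 0\<^sub>m 1 n * 0\<^sub>m n 1) (1\<^sub>m 1 * 0\<^sub>m 1 n + 0\<^sub>m 1 n * U)
     (0\<^sub>m n 1 * 1\<^sub>m 1 + U\<^sup>T * 0\<^sub>m n 1) (0\<^sub>m n 1 * 0\<^sub>m 1 n + U\<^sup>T * U)"
    unfolding Bt unfolding B_def by (rule mult_four_block_mat) (use Uc in auto)
  also have "\<dots> = four_block_mat (1\<^sub>m 1) (0\<^sub>m 1 n) (0\<^sub>m n 1) (1\<^sub>m n)"
    using Uc by (intro cong_four_block_mat) auto
  also have "\<dots> = 1\<^sub>m (Suc n)" by simp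
  finally have 1: "B\<^sup>T * B = 1\<^sub>m (Suc n)" .
  have "B * B\<^sup>T = four_block_mat (1\<^sub>m 1 * 1\<^sub>m 1 + 0\<^sub>m 1 n * 0\<^sub>m n 1) (1\<^sub>m 1 * 0\<^sub>m 1 n + 0\<^sub>m 1 n * U\<^sup>T)
     (0\<^sub>m n 1 * 1\<^sub>m 1 + U * 0\<^sub>m n 1) (0\<^sub>m n 1 * 0\<^sub>m 1 n + U * U\<^sup>T)"
    unfolding Bt unfolding B_def by (rule mult_four_block_mat) (use Uc in auto)
  also have "\<dots> = four_block_mat (1\<^sub>m 1) (0\<^sub>m 1 n) (0\<^sub>m n 1) (1\<^sub>m n)"
    using Uc by (intro cong_four_block_mat) auto
  also have "\<dots> = 1\<^sub>m (Suc n)" by simp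
  finally have 2: "B * B\<^sup>T = 1\<^sub>m (Suc n)" .
  show ?thesis using 1 2 Bc unfolding orthonormal_mat_def B_def by auto
qed

lemma one_block_congruence:
  fixes U A :: "real mat"
  assumes U: "U \<in> carrier_mat n n" and A: "A \<in> carrier_mat n n"
  defines "B \<equiv> four_block_mat (1\<^sub>m 1) (0\<^sub>m 1 n) (0\<^sub>m n 1) U"
  shows "B\<^sup>T * four_block_mat (mat 1 1 (\<lambda>_. l)) (0\<^sub>m 1 n) (0\<^sub>m n 1) A * B
   = four_block_mat (mat 1 1 (\<lambda>_. l)) (0\<^sub>m 1 n) (0\<^sub>m n 1) (U\<^sup>T * A * U)"
proof -
  let ?L = "mat 1 1 (\<lambda>_. l) :: real mat"
  have L: "?L \<in> carrier_mat 1 1" by auto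
  note [simp] = left_mult_one_mat[OF L] right_mult_one_mat[OF L]
  have Bt: "B\<^sup>T = four_block_mat (1\<^sub>m 1) (0\<^sub>m 1 n) (0\<^sub>m n 1) U\<^sup>T"
    unfolding B_def by (subst transpose_four_block_mat[of _ 1 1 _ n _ n]) (use U in auto)
  have "B\<^sup>T * four_block_mat ?L (0\<^sub>m 1 n) (0\<^sub>m n 1) A
    = four_block_mat (1\<^sub>m 1 * ?L + 0\<^sub>m 1 n * 0\<^sub>m n 1) (1\<^sub>m 1 * 0\<^sub>m 1 n + 0\<^sub>m 1 n * A)
     (0\<^sub>m n 1 * ?L + U\<^sup>T * 0\<^sub>m n 1) (0\<^sub>m n 1 * 0\<^sub>m 1 n + U\<^sup>T * A)"
    unfolding Bt by (rule mult_four_block_mat) (use U A in auto)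
  also have "\<dots> = four_block_mat ?L (0\<^sub>m 1 n) (0\<^sub>m n 1) (U\<^sup>T * A)"
    using U A by (intro cong_four_block_mat) auto
  also have "\<dots> * B = four_block_mat (?L * 1\<^sub>m 1 + 0\<^sub>m 1 n * 0\<^sub>m n 1) (?L * 0\<^sub>m 1 n + 0\<^sub>m 1 n * U)
     (0\<^sub>m n 1 * 1\<^sub>m 1 + (U\<^sup>T * A) * 0\<^sub>m n 1) (0\<^sub>m n 1 * 0\<^sub>m 1 n + (U\<^sup>T * A) * U)"
    unfolding B_def by (rule mult_four_block_mat) (use U A in auto)
  also have "\<dots> = four_block_mat ?L (0\<^sub>m 1 n) (0\<^sub>m n 1) (U\<^sup>T * A * U)"
    using U A by (intro cong_four_block_mat) auto
  finally show ?thesis .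
qed

lemma orthonormal_congruence_first_col:
  assumes W: "orthonormal_mat n W" and A: "A \<in> carrier_mat n n"
    and Wu: "col W 0 = u" and Au: "A *\<^sub>v u = l \<cdot>\<^sub>v u" and i: "i < n"
  shows "(W\<^sup>T * A * W) $$ (i,0) = (if i = 0 then l else 0)"
proof -
  note Wc = orthonormal_matD[OF W]
  have cW: "col W j \<in> carrier_vec n" for j using Wc(1) by (auto intro!: carrier_vecI)
  have "(W\<^sup>T * A * W) $$ (i,0) = (W\<^sup>T * (A * W)) $$ (i,0)"
    using Wc A by (subst assoc_mult_mat[of _ n n _ n _ n]) auto
  also have "\<dots> = row W\<^sup>T i \<bullet> col (A * W) 0" using Wc A i by (intro index_mult_mat) auto
  also have "row W\<^sup>T i = col W i" using Wc i by (intro row_transpose) auto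
  also have "col (A * W) 0 = A *\<^sub>v col W 0" using Wc A i by (intro col_mult2) auto
  also have "col W i \<bullet> (A *\<^sub>v col W 0) = l * (col W i \<bullet> col W 0)"
    unfolding Wu Au using Wu cW by (metis scalar_prod_smult_distrib)
  also have "col W i \<bullet> col W 0 = (W\<^sup>T * W) $$ (i,0)" using Wc(1) i by auto
  finally show ?thesis using Wc(2) i by simp
qed

lemma symmetric_first_col_four_block:
  assumes B: "B \<in> carrier_mat (Suc n) (Suc n)" and sym: "B\<^sup>T = B"
    and col0: "\<And>i. i < Suc n \<Longrightarrow> B $$ (i,0) = (if i = 0 then l else 0)"
  shows "B = four_block_mat (mat 1 1 (\<lambda>_. l)) (0\<^sub>m 1 n) (0\<^sub>m n 1) (mat n n (\<lambda>(i,j). B $$ (Suc i, Suc j)))"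
proof (rule eq_matI)
  fix i j assume "i < dim_row (four_block_mat (mat 1 1 (\<lambda>_. l)) (0\<^sub>m 1 n) (0\<^sub>m n 1) (mat n n (\<lambda>(i,j). B $$ (Suc i, Suc j))))"
    and "j < dim_col (four_block_mat (mat 1 1 (\<lambda>_. l)) (0\<^sub>m 1 n) (0\<^sub>m n 1) (mat n n (\<lambda>(i,j). B $$ (Suc i, Suc j))))"
  hence i: "i < Suc n" and j: "j < Suc n" by auto
  have row0: "B $$ (0,j) = (if j = 0 then l else 0)"
    using col0[OF j] B j by (metis carrier_matD index_transpose_mat(1) sym zero_less_Suc)
  show "B $$ (i,j) = four_block_mat (mat 1 1 (\<lambda>_. l)) (0\<^sub>m 1 n) (0\<^sub>m n 1) (mat n n (\<lambda>(i,j). B $$ (Suc i, Suc j))) $$ (i,j)"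
    using i j col0[OF i] row0 by (cases i; cases j) auto
qed (use B in auto)

lemma real_symmetric_diagonalizable:
  fixes A :: "real mat"
  assumes "A \<in> carrier_mat n n" and "A\<^sup>T = A"
  shows "\<exists>U d. orthonormal_mat n U \<and> U\<^sup>T * A * U = mat_diag n d"
  using assms
proof (induction n arbitrary: A)
  case 0
  have "orthonormal_mat 0 (1\<^sub>m 0)" unfolding orthonormal_mat_def by auto
  moreover have "(1\<^sub>m 0)\<^sup>T * A * 1\<^sub>m 0 = mat_diag 0 (\<lambda>_. 0)"
    by (rule eq_matI) (use 0 in \<open>auto simp: mat_diag_def\<close>)
  ultimately show ?case by blast
next
  case (Suc n)
  note A = Suc.prems(1) and sym = Suc.prems(2)
  obtain l u where u: "u \<in> carrier_vec (Suc n)" "u \<bullet> u = 1" and Au: "A *\<^sub>v u = l \<cdot>\<^sub>v u"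
    using real_symmetric_unit_eigenvector[OF A sym] by blast
  obtain W where W: "orthonormal_mat (Suc n) W" and Wu: "col W 0 = u"
    using orthonormal_mat_with_first_col[OF u] by blast
  note Wc = orthonormal_matD[OF W]
  define A' where "A' = W\<^sup>T * A * W"
  define A3 where "A3 = mat n n (\<lambda>(i,j). A' $$ (Suc i, Suc j))"
  have A'c: "A' \<in> carrier_mat (Suc n) (Suc n)" unfolding A'_def using Wc A by auto
  have A'sym: "A'\<^sup>T = A'" unfolding A'_def using Wc A sym
    by (simp add: transpose_mult[of _ "Suc n" "Suc n" _ "Suc n"] assoc_mult_mat[of _ "Suc n" "Suc n" _ "Suc n" _ "Suc n"])
  have A'blk: "A' = four_block_mat (mat 1 1 (\<lambda>_. l)) (0\<^sub>m 1 n) (0\<^sub>m n 1) A3"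
    unfolding A3_def using A'c A'sym
    by (rule symmetric_first_col_four_block)
      (use orthonormal_congruence_first_col[OF W A Wu Au] in \<open>simp add: A'_def\<close>)
  have A3c: "A3 \<in> carrier_mat n n" unfolding A3_def by auto
  have A3sym: "A3\<^sup>T = A3"
    unfolding A3_def using A'c A'sym by (intro eq_matI) (auto, metis carrier_matD index_transpose_mat(1) Suc_less_eq)
  obtain U3 d3 where U3: "orthonormal_mat n U3" and D3: "U3\<^sup>T * A3 * U3 = mat_diag n d3"
    using Suc.IH[OF A3c A3sym] by blast
  define B where "B = four_block_mat (1\<^sub>m 1) (0\<^sub>m 1 n) (0\<^sub>m n 1) U3"
  have B: "orthonormal_mat (Suc n) B" unfolding B_def by (rule orthonormal_mat_one_block[OF U3])
  note Bc = orthonormal_matD(1)[OF B]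
  have "(W * B)\<^sup>T * A * (W * B) = B\<^sup>T * A' * B"
    unfolding A'_def using Wc(1) Bc A
    by (simp add: transpose_mult[of _ "Suc n" "Suc n" _ "Suc n"] assoc_mult_mat[of _ "Suc n" "Suc n" _ "Suc n" _ "Suc n"])
  also have "\<dots> = four_block_mat (mat 1 1 (\<lambda>_. l)) (0\<^sub>m 1 n) (0\<^sub>m n 1) (U3\<^sup>T * A3 * U3)"
    unfolding A'blk B_def by (rule one_block_congruence[OF orthonormal_matD(1)[OF U3] A3c])
  also have "\<dots> = mat_diag (Suc n) (\<lambda>i. if i = 0 then l else d3 (i - 1))"
    unfolding D3 by (rule eq_matI) (auto simp: mat_diag_def)
  finally show ?case using orthonormal_mat_mult[OF W B] by blast
qed

lemma orthonormal_mat_cancel: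
  assumes U: "orthonormal_mat n U" and Z: "Z \<in> carrier_mat n n"
  shows "U\<^sup>T * (U * Z) = Z" and "U * (U\<^sup>T * Z) = Z"
proof -
  note Uc = orthonormal_matD[OF U]
  have "U\<^sup>T * (U * Z) = (U\<^sup>T * U) * Z" using Uc(1) Z by (simp add: assoc_mult_mat[of _ n n _ n _ n])
  thus "U\<^sup>T * (U * Z) = Z" using Uc(2) Z by simp
  have "U * (U\<^sup>T * Z) = (U * U\<^sup>T) * Z" using Uc(1) Z by (simp add: assoc_mult_mat[of _ n n _ n _ n])
  thus "U * (U\<^sup>T * Z) = Z" using Uc(3) Z by simp
qed

lemma real_symmetric_spectral_decomposition:
  fixes A :: "real mat"
  assumes A: "A \<in> carrier_mat n n" and "A\<^sup>T = A"
  shows "\<exists>U d. orthonormal_mat n U \<and> A = U * mat_diag n d * U\<^sup>T"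
proof -
  obtain U d where U: "orthonormal_mat n U" and D: "U\<^sup>T * A * U = mat_diag n d"
    using real_symmetric_diagonalizable[OF assms] by blast
  note Uc = orthonormal_matD[OF U]
  have "U * mat_diag n d * U\<^sup>T = A"
    unfolding D[symmetric] using Uc A by (simp add: assoc_mult_mat[of _ n n _ n _ n] mult_carrier_mat[of _ n n _ n] orthonormal_mat_cancel[OF U])
  thus ?thesis using U by auto
qed

lemma spectral_decomposition_entry:
  assumes U: "orthonormal_mat n U" and X: "X = U * mat_diag n d * U\<^sup>T" and a: "a < n" and b: "b < n"
  shows "X $$ (a,b) = (\<Sum>k<n. U$$(a,k) * d k * U$$(b,k))"
proof -
  note Uc = orthonormal_matD(1)[OF U]
  have "U * mat_diag n d = mat n n (\<lambda>(i,j). U$$(i,j) * d j)" by (rule mat_diag_mult_right[OF Uc])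
  thus ?thesis unfolding X using Uc a b by (simp add: scalar_prod_def atLeast0LessThan)
qed

lemma spectral_decomposition_diag:
  assumes U: "orthonormal_mat n U" and X: "X = U * mat_diag n d * U\<^sup>T"
  shows "U\<^sup>T * X * U = mat_diag n d"
proof -
  note Uc = orthonormal_matD[OF U]
  show ?thesis unfolding X using Uc
    by (simp add: assoc_mult_mat[of _ n n _ n _ n] mult_carrier_mat[of _ n n _ n] orthonormal_mat_cancel[OF U]
        right_mult_one_mat[of _ n n])
qed

lemma quadratic_form_sum:
  fixes X :: "real mat"
  assumes "v \<in> carrier_vec n" and "X \<in> carrier_mat n n"
  shows "v \<bullet> (X *\<^sub>v v) = (\<Sum>a<n. \<Sum>b<n. v$a * X$$(a,b) * v$b)"
  using assms by (simp add: scalar_prod_def atLeast0LessThan sum_distrib_left ac_simps)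

lemma spectral_decomposition_eigenvalue:
  assumes U: "orthonormal_mat n U" and X: "X = U * mat_diag n d * U\<^sup>T" and k: "k < n"
  shows "d k = col U k \<bullet> (X *\<^sub>v col U k)"
proof -
  note Uc = orthonormal_matD(1)[OF U]
  have Xc: "X \<in> carrier_mat n n" unfolding X using Uc by auto
  have "d k = (U\<^sup>T * (X * U)) $$ (k,k)"
    using spectral_decomposition_diag[OF U X] Uc Xc k
    by (simp add: assoc_mult_mat[of _ n n _ n _ n] mat_diag_def)
  also have "\<dots> = row U\<^sup>T k \<bullet> col (X * U) k" using Uc Xc k by (intro index_mult_mat) auto
  also have "row U\<^sup>T k = col U k" using Uc k by (intro row_transpose) auto
  also have "col (X * U) k = X *\<^sub>v col U k" using Uc Xc k by (intro col_mult2) auto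
  finally show ?thesis .
qed

lemma spectral_decomposition_eigenvalue_sum:
  assumes U: "orthonormal_mat n U" and X: "X = U * mat_diag n d * U\<^sup>T" and k: "k < n"
  shows "d k = (\<Sum>a<n. \<Sum>b<n. U$$(a,k) * X$$(a,b) * U$$(b,k))"
proof -
  note Uc = orthonormal_matD(1)[OF U]
  have "col U k \<in> carrier_vec n" and "X \<in> carrier_mat n n" unfolding X using Uc by auto
  hence "d k = (\<Sum>a<n. \<Sum>b<n. col U k $ a * X$$(a,b) * col U k $ b)"
    using spectral_decomposition_eigenvalue[OF U X k] quadratic_form_sum by simp
  also have "\<dots> = (\<Sum>a<n. \<Sum>b<n. U$$(a,k) * X$$(a,b) * U$$(b,k))" using Uc k by (intro sum.cong refl) auto
  finally show ?thesis .
qed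

lemma proots_prod_linear_factors: "proots (\<Prod>a\<leftarrow>(xs :: real list). [:- a, 1:]) = mset xs"
proof (induction xs)
  case (Cons x xs)
  have "(\<Prod>a\<leftarrow>xs. [:- a, 1:]) \<noteq> 0" by (auto simp: prod_list_zero_iff)
  hence "proots ([:- x, 1:] * (\<Prod>a\<leftarrow>xs. [:- a, 1:])) = proots [:- x, 1:] + proots (\<Prod>a\<leftarrow>xs. [:- a, 1:])"
    by (intro proots_mult) auto
  thus ?case using Cons by simp
qed simp

lemma proots_char_poly_spectral_decomposition:
  assumes U: "orthonormal_mat n U" and X: "X = U * mat_diag n d * U\<^sup>T"
  shows "proots (char_poly X) = mset (map d [0..<n])"
proof -
  note Uc = orthonormal_matD[OF U]
  have "similar_mat_wit X (mat_diag n d) U U\<^sup>T"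
    unfolding similar_mat_wit_def Let_def using Uc X by auto
  hence "char_poly X = char_poly (mat_diag n d)"
    by (intro char_poly_similar) (auto simp: similar_mat_def)
  also have "\<dots> = (\<Prod>a\<leftarrow>diag_mat (mat_diag n d). [:- a, 1:])"
    by (rule char_poly_upper_triangular) (auto simp: upper_triangular_def mat_diag_def)
  also have "diag_mat (mat_diag n d) = map d [0..<n]" unfolding diag_mat_def by (auto simp: mat_diag_def)
  finally show ?thesis by (metis proots_prod_linear_factors)
qed

lemma mat_trace_spectral_decomposition:
  assumes U: "orthonormal_mat n U" and X: "X = U * mat_diag n d * U\<^sup>T"
  shows "mat_trace X = (\<Sum>k<n. d k)"
proof -
  have "mat_trace X = (\<Sum>a<n. \<Sum>k<n. U$$(a,k) * d k * U$$(a,k))"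
    unfolding mat_trace_def using spectral_decomposition_entry[OF U X] orthonormal_matD(1)[OF U]
    by (simp add: X)
  also have "\<dots> = (\<Sum>k<n. d k * (\<Sum>a<n. U$$(a,k) * U$$(a,k)))"
    by (subst sum.swap) (simp add: sum_distrib_left ac_simps)
  also have "\<dots> = (\<Sum>k<n. d k)" using orthonormal_mat_col_sum[OF U] by simp
  finally show ?thesis .
qed

definition xlnx :: "real \<Rightarrow> real" where
  "xlnx x = (if x = 0 then 0 else x * ln x)"

lemma vn_entropy_spectral_decomposition:
  assumes U: "orthonormal_mat n U" and X: "X = U * mat_diag n d * U\<^sup>T"
  shows "vn_entropy X = (\<Sum>k<n. xlnx (d k) - d k)"
proof -
  have "sum_mset (image_mset (\<lambda>l. if l = 0 then 0 else l * ln l) (proots (char_poly X)))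
      = (\<Sum>k<n. xlnx (d k))"
    unfolding proots_char_poly_spectral_decomposition[OF U X]
    by (simp add: multiset.map_comp sum_unfold_sum_mset comp_def xlnx_def atLeast0LessThan)
  thus ?thesis unfolding vn_entropy_def mat_trace_spectral_decomposition[OF U X] by (simp add: sum_subtractf)
qed

lemma sum_sq_entries_spectral_decomposition:
  assumes U: "orthonormal_mat n U" and X: "X = U * mat_diag n d * U\<^sup>T"
  shows "(\<Sum>a<n. \<Sum>b<n. (X$$(a,b))\<^sup>2) = (\<Sum>k<n. (d k)\<^sup>2)"
proof -
  note Uc = orthonormal_matD[OF U]
  have Xc: "X \<in> carrier_mat n n" unfolding X using Uc by auto
  have "X * X = U * (mat_diag n d * mat_diag n d) * U\<^sup>T"
    unfolding X using Uc(1)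
    by (simp add: assoc_mult_mat[of _ n n _ n _ n] mult_carrier_mat[of _ n n _ n] orthonormal_mat_cancel[OF U]
        del: mat_diag_diag)
  also have "\<dots> = U * mat_diag n (\<lambda>k. (d k)\<^sup>2) * U\<^sup>T" by (simp add: power2_eq_square)
  finally have "mat_trace (X * X) = (\<Sum>k<n. (d k)\<^sup>2)" by (rule mat_trace_spectral_decomposition[OF U])
  moreover have "X $$ (b,a) = X $$ (a,b)" if "a < n" "b < n" for a b
    using spectral_decomposition_entry[OF U X] that by (simp add: ac_simps)
  ultimately show ?thesis
    unfolding mat_trace_def using Xc by (simp add: scalar_prod_def atLeast0LessThan power2_eq_square)
qed

lemma xlnx_ge_minus_one: "0 \<le> x \<Longrightarrow> x - 1 \<le> xlnx x"
  unfolding xlnx_def using ln_le_minus_one[of "1 / x"]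
  by (auto simp: ln_div field_simps)

lemma psd_spectral_decomposition:
  assumes P: "psd n X"
  shows "\<exists>U d. orthonormal_mat n U \<and> X = U * mat_diag n d * U\<^sup>T \<and> (\<forall>k<n. 0 \<le> d k \<and> d k \<le> mat_trace X)"
proof -
  have Xc: "X \<in> carrier_mat n n" and nn: "\<forall>v\<in>carrier_vec n. 0 \<le> v \<bullet> (X *\<^sub>v v)"
    using P unfolding psd_def by auto
  obtain U d where U: "orthonormal_mat n U" and X: "X = U * mat_diag n d * U\<^sup>T"
    using real_symmetric_spectral_decomposition[OF Xc] P unfolding psd_def by blast
  have d0: "0 \<le> d k" if "k < n" for k
    using spectral_decomposition_eigenvalue[OF U X that] nn orthonormal_matD(1)[OF U]
    by (auto intro!: carrier_vecI)
  have "d k \<le> mat_trace X" if "k < n" for k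
    unfolding mat_trace_spectral_decomposition[OF U X] using that d0 by (intro member_le_sum) auto
  thus ?thesis using U X d0 by blast
qed

lemma vn_entropy_psd_ge:
  assumes "psd n X"
  shows "- real n \<le> vn_entropy X"
proof -
  obtain U d where U: "orthonormal_mat n U" and X: "X = U * mat_diag n d * U\<^sup>T"
    and d: "\<forall>k<n. 0 \<le> d k"
    using psd_spectral_decomposition[OF assms] by blast
  have "(\<Sum>k<n. - 1) \<le> (\<Sum>k<n. xlnx (d k) - d k)"
    using d xlnx_ge_minus_one by (intro sum_mono) fastforce
  thus ?thesis unfolding vn_entropy_spectral_decomposition[OF U X] by simp
qed

lemma ln_diff_ge:
  fixes x m T :: real
  shows "0 < m \<Longrightarrow> m \<le> x \<Longrightarrow> x \<le> T \<Longrightarrow> (x - m) / T \<le> ln x - ln m"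
proof -
  assume m: "0 < m" and x: "m \<le> x" "x \<le> T"
  have "ln (m / x) \<le> m / x - 1" using m x by (intro ln_le_minus_one) auto
  hence "(x - m) / x \<le> ln x - ln m" using m x by (simp add: ln_div field_simps)
  moreover have "(x - m) / T \<le> (x - m) / x" using m x by (intro divide_left_mono) auto
  ultimately show ?thesis by linarith
qed

lemma ln_diff_le:
  fixes x m T :: real
  shows "0 < x \<Longrightarrow> x \<le> m \<Longrightarrow> m \<le> T \<Longrightarrow> ln x - ln m \<le> (x - m) / T"
proof -
  assume x: "0 < x" "x \<le> m" and m: "m \<le> T"
  have "ln (x / m) \<le> x / m - 1" using x by (intro ln_le_minus_one) auto
  hence "ln x - ln m \<le> (x - m) / m" using x by (simp add: ln_div field_simps)
  moreover have "(m - x) / T \<le> (m - x) / m" using x m by (intro divide_left_mono) auto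
  hence "(x - m) / m \<le> (x - m) / T" by (metis minus_diff_eq minus_divide_left neg_le_iff_le)
  ultimately show ?thesis by linarith
qed

text \<open>Strong convexity of \<open>x ln x\<close> on \<open>[0, T]\<close>, where its second derivative \<open>1 / x\<close> is at least \<open>1 / T\<close>.\<close>

lemma xlnx_tangent_gap_ge:
  fixes m y T :: real
  assumes m: "0 < m" "m \<le> T" and y: "0 \<le> y" "y \<le> T"
  shows "(y - m)\<^sup>2 / (2*T) \<le> xlnx y - xlnx m - (ln m + 1) * (y - m)"
proof (cases "y = 0")
  case True
  have "m\<^sup>2 \<le> m * (2*T)" using m by (simp add: power2_eq_square mult_left_mono)
  hence "m\<^sup>2 / (2*T) \<le> m" using m by (simp add: divide_le_eq)
  thus ?thesis using True m by (simp add: xlnx_def algebra_simps)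
next
  case False
  hence yp: "y > 0" using y by auto
  have T: "T > 0" using m by simp
  define g where "g x = x * ln x - m * ln m - (ln m + 1) * (x - m) - (x - m)\<^sup>2 / (2*T)" for x
  have dg: "DERIV g x :> ln x - ln m - (x - m) / T" if "x > 0" for x
  proof -
    have "DERIV g x :> 1 * ln x + x * (1 / x) - 0 - (ln m + 1) * (1 - 0) - (2 * (x - m) * (1 - 0)) / (2*T)"
      unfolding g_def using that T by (auto intro!: derivative_eq_intros simp: power2_eq_square field_simps)
    moreover have "1 * ln x + x * (1 / x) - 0 - (ln m + 1) * (1 - 0) - (2 * (x - m) * (1 - 0)) / (2*T)
       = ln x - ln m - (x - m) / T" using that T by (simp add: field_simps)
    ultimately show ?thesis by (simp only:)
  qed
  have "g m \<le> g y"
  proof (cases "m \<le> y")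
    case True
    show ?thesis
    proof (rule DERIV_nonneg_imp_nondecreasing[OF True])
      fix x assume x: "m \<le> x" "x \<le> y"
      have xp: "0 < x" using x m by simp
      have "0 \<le> ln x - ln m - (x - m) / T" using ln_diff_ge[OF m(1) x(1)] x y by simp
      thus "\<exists>z. DERIV g x :> z \<and> 0 \<le> z" using dg[OF xp] by blast
    qed
  next
    case False
    hence "y \<le> m" by simp
    thus ?thesis
    proof (rule DERIV_nonpos_imp_nonincreasing)
      fix x assume x: "y \<le> x" "x \<le> m"
      have xp: "0 < x" using x yp by simp
      have "ln x - ln m - (x - m) / T \<le> 0" using ln_diff_le[OF xp x(2) m(2)] by simp
      thus "\<exists>z. DERIV g x :> z \<and> z \<le> 0" using dg[OF xp] by blast
    qed
  qed
  thus ?thesis using yp m unfolding g_def xlnx_def by (simp add: algebra_simps)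
qed

lemma xlnx_convex_combination_le:
  fixes c d :: "nat \<Rightarrow> real"
  assumes c: "\<And>j. j < n \<Longrightarrow> 0 \<le> c j" and c1: "(\<Sum>j<n. c j) = 1"
    and d: "\<And>j. j < n \<Longrightarrow> 0 \<le> d j \<and> d j \<le> T"
    and m: "m = (\<Sum>j<n. c j * d j)"
  shows "xlnx m + (1/(2*T)) * (\<Sum>j<n. c j * (d j)\<^sup>2) \<le> (\<Sum>j<n. c j * xlnx (d j)) + (1/(2*T)) * m\<^sup>2"
proof (cases "m = 0")
  case True
  have "\<forall>j\<in>{..<n}. c j * d j = 0"
    using m True c d by (subst sum_nonneg_eq_0_iff[symmetric]) auto
  hence z: "\<And>j. j < n \<Longrightarrow> c j = 0 \<or> d j = 0" by auto
  have "(\<Sum>j<n. c j * (d j)\<^sup>2) = 0" using z by (intro sum.neutral) auto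
  moreover have "(\<Sum>j<n. c j * xlnx (d j)) = 0" using z by (intro sum.neutral) (auto simp: xlnx_def)
  ultimately show ?thesis using True by (simp add: xlnx_def)
next
  case False
  have "m \<ge> 0" unfolding m using c d by (intro sum_nonneg) auto
  hence mp: "m > 0" using False by auto
  have "m \<le> (\<Sum>j<n. c j * T)" unfolding m using c d by (intro sum_mono mult_left_mono) auto
  hence mT: "m \<le> T" using c1 by (simp add: sum_distrib_right[symmetric])
  have "(\<Sum>j<n. c j * ((d j - m)\<^sup>2 / (2*T))) \<le> (\<Sum>j<n. c j * (xlnx (d j) - xlnx m - (ln m + 1) * (d j - m)))"
    using xlnx_tangent_gap_ge[OF mp mT] c d by (intro sum_mono mult_left_mono) auto
  moreover have "(\<Sum>j<n. c j * (xlnx (d j) - xlnx m - (ln m + 1) * (d j - m)))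
     = (\<Sum>j<n. c j * xlnx (d j)) - xlnx m * (\<Sum>j<n. c j) - (ln m + 1) * ((\<Sum>j<n. c j * d j) - m * (\<Sum>j<n. c j))"
    by (simp add: algebra_simps sum_subtractf sum_distrib_left sum.distrib)
  moreover have "(\<Sum>j<n. c j * ((d j - m)\<^sup>2 / (2*T)))
     = (1/(2*T)) * ((\<Sum>j<n. c j * (d j)\<^sup>2) - 2 * m * (\<Sum>j<n. c j * d j) + m\<^sup>2 * (\<Sum>j<n. c j))"
    by (simp add: algebra_simps power2_eq_square sum_subtractf sum_distrib_left sum.distrib
        sum_divide_distrib add_divide_distrib diff_divide_distrib)
  ultimately have "(1/(2*T)) * ((\<Sum>j<n. c j * (d j)\<^sup>2) - 2 * m * m + m\<^sup>2) \<le> (\<Sum>j<n. c j * xlnx (d j)) - xlnx m"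
    using c1 m[symmetric] by simp
  thus ?thesis by (simp add: power2_eq_square algebra_simps)
qed

lemma doubly_stochastic_xlnx_le:
  fixes c :: "nat \<Rightarrow> nat \<Rightarrow> real"
  assumes c0: "\<And>k j. k < n \<Longrightarrow> j < n \<Longrightarrow> 0 \<le> c k j"
    and rows: "\<And>k. k < n \<Longrightarrow> (\<Sum>j<n. c k j) = 1" and cols: "\<And>j. j < n \<Longrightarrow> (\<Sum>k<n. c k j) = 1"
    and d: "\<And>j. j < n \<Longrightarrow> 0 \<le> d j \<and> d j \<le> T"
    and z: "\<And>k. k < n \<Longrightarrow> z k = (\<Sum>j<n. c k j * d j)"
  shows "(\<Sum>k<n. xlnx (z k)) + (1/(2*T)) * (\<Sum>j<n. (d j)\<^sup>2)
    \<le> (\<Sum>j<n. xlnx (d j)) + (1/(2*T)) * (\<Sum>k<n. (z k)\<^sup>2)"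
proof -
  have mix: "(\<Sum>k<n. \<Sum>j<n. c k j * g j) = (\<Sum>j<n. g j)" for g :: "nat \<Rightarrow> real"
  proof -
    have "(\<Sum>k<n. \<Sum>j<n. c k j * g j) = (\<Sum>j<n. g j * (\<Sum>k<n. c k j))"
      by (subst sum.swap) (simp add: sum_distrib_left ac_simps)
    thus ?thesis using cols by simp
  qed
  have "(\<Sum>k<n. xlnx (z k) + (1/(2*T)) * (\<Sum>j<n. c k j * (d j)\<^sup>2))
     \<le> (\<Sum>k<n. (\<Sum>j<n. c k j * xlnx (d j)) + (1/(2*T)) * (z k)\<^sup>2)"
    using xlnx_convex_combination_le[OF c0 rows d z] by (intro sum_mono) auto
  thus ?thesis by (simp only: sum.distrib sum_distrib_left[symmetric] mix)
qed

definition pinch :: "nat \<Rightarrow> (nat \<Rightarrow> 'c) \<Rightarrow> real mat \<Rightarrow> real mat" where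
  "pinch n cl X = mat n n (\<lambda>(a,b). if cl a = cl b then X$$(a,b) else 0)"

lemma sum_swap3: "(\<Sum>a\<in>A. \<Sum>b\<in>B. \<Sum>k\<in>C. f a b k) = (\<Sum>k\<in>C. \<Sum>a\<in>A. \<Sum>b\<in>B. f a b k)"
proof -
  have "(\<Sum>a\<in>A. \<Sum>b\<in>B. \<Sum>k\<in>C. f a b k) = (\<Sum>a\<in>A. \<Sum>k\<in>C. \<Sum>b\<in>B. f a b k)"
    by (rule sum.cong[OF refl], rule sum.swap)
  also have "\<dots> = (\<Sum>k\<in>C. \<Sum>a\<in>A. \<Sum>b\<in>B. f a b k)" by (rule sum.swap)
  finally show ?thesis .
qed

lemma sum_same_class:
  fixes g :: "nat \<Rightarrow> nat \<Rightarrow> real" and cl :: "nat \<Rightarrow> 'c"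
  shows "(\<Sum>a<n. \<Sum>b<n. if cl a = cl b then g a b else 0)
     = (\<Sum>s\<in>cl ` {..<n}. \<Sum>a<n. \<Sum>b<n. if cl a = s \<and> cl b = s then g a b else 0)"
proof -
  have inner: "(\<Sum>s\<in>cl ` {..<n}. if cl a = s \<and> cl b = s then g a b else 0) = (if cl a = cl b then g a b else 0)"
    if "a \<in> {..<n}" for a b
  proof -
    have "(\<Sum>s\<in>cl ` {..<n}. if cl a = s \<and> cl b = s then g a b else 0)
       = (\<Sum>s\<in>cl ` {..<n}. if s = cl a then (if cl b = cl a then g a b else 0) else 0)"
      by (rule sum.cong) auto
    also have "\<dots> = (if cl a = cl b then g a b else 0)" using that by (simp add: sum.delta' eq_commute)
    finally show ?thesis .
  qed
  have "(\<Sum>s\<in>cl ` {..<n}. \<Sum>a<n. \<Sum>b<n. if cl a = s \<and> cl b = s then g a b else 0)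
     = (\<Sum>a<n. \<Sum>b<n. \<Sum>s\<in>cl ` {..<n}. if cl a = s \<and> cl b = s then g a b else 0)"
    by (rule sum_swap3[symmetric])
  also have "\<dots> = (\<Sum>a<n. \<Sum>b<n. if cl a = cl b then g a b else 0)"
    using inner by (intro sum.cong refl) simp
  finally show ?thesis by (rule sym)
qed

lemma sum_same_class_products_nonneg:
  fixes f :: "nat \<Rightarrow> real" and cl :: "nat \<Rightarrow> 'c"
  shows "0 \<le> (\<Sum>a<n. \<Sum>b<n. if cl a = cl b then f a * f b else 0)"
proof -
  have "(\<Sum>a<n. \<Sum>b<n. if cl a = s \<and> cl b = s then f a * f b else 0) = (\<Sum>a<n. if cl a = s then f a else 0)\<^sup>2" for s
    unfolding power2_eq_square sum_product by (intro sum.cong refl) auto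
  thus ?thesis unfolding sum_same_class[where cl = cl] by (simp add: sum_nonneg)
qed

lemma psd_pinch:
  assumes P: "psd n X"
  shows "psd n (pinch n cl X)"
proof -
  have Xc: "X \<in> carrier_mat n n" and sym: "X\<^sup>T = X" and nn: "\<forall>v\<in>carrier_vec n. 0 \<le> v \<bullet> (X *\<^sub>v v)"
    using P unfolding psd_def by auto
  have Zc: "pinch n cl X \<in> carrier_mat n n" unfolding pinch_def by simp
  have Zsym: "(pinch n cl X)\<^sup>T = pinch n cl X"
  proof (rule eq_matI)
    fix i j assume "i < dim_row (pinch n cl X)" "j < dim_col (pinch n cl X)"
    hence i: "i < n" and j: "j < n" unfolding pinch_def by auto
    have "X$$(j,i) = X$$(i,j)" using sym Xc i j by (metis carrier_matD index_transpose_mat(1))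
    thus "(pinch n cl X)\<^sup>T $$ (i,j) = pinch n cl X $$ (i,j)" using i j unfolding pinch_def by auto
  qed (auto simp: pinch_def)
  have Znn: "0 \<le> v \<bullet> (pinch n cl X *\<^sub>v v)" if v: "v \<in> carrier_vec n" for v
  proof -
    have "v \<bullet> (pinch n cl X *\<^sub>v v) = (\<Sum>a<n. \<Sum>b<n. v$a * pinch n cl X $$(a,b) * v$b)"
      by (rule quadratic_form_sum[OF v Zc])
    also have "\<dots> = (\<Sum>a<n. \<Sum>b<n. if cl a = cl b then v$a * X$$(a,b) * v$b else 0)"
      by (intro sum.cong refl) (auto simp: pinch_def)
    also have "\<dots> = (\<Sum>s\<in>cl ` {..<n}. \<Sum>a<n. \<Sum>b<n. if cl a = s \<and> cl b = s then v$a * X$$(a,b) * v$b else 0)"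
      by (rule sum_same_class)
    also have "\<dots> \<ge> 0"
    proof (rule sum_nonneg)
      fix s assume "s \<in> cl ` {..<n}"
      define w where "w = vec n (\<lambda>a. if cl a = s then v$a else 0)"
      have w: "w \<in> carrier_vec n" unfolding w_def by simp
      have "0 \<le> w \<bullet> (X *\<^sub>v w)" using nn w by auto
      also have "\<dots> = (\<Sum>a<n. \<Sum>b<n. w$a * X$$(a,b) * w$b)" by (rule quadratic_form_sum[OF w Xc])
      also have "\<dots> = (\<Sum>a<n. \<Sum>b<n. if cl a = s \<and> cl b = s then v$a * X$$(a,b) * v$b else 0)"
        by (intro sum.cong refl) (auto simp: w_def)
      finally show "0 \<le> (\<Sum>a<n. \<Sum>b<n. if cl a = s \<and> cl b = s then v$a * X$$(a,b) * v$b else 0)" .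
    qed
    finally show ?thesis .
  qed
  show ?thesis unfolding psd_def using Zc Zsym Znn by auto
qed

lemma mat_trace_pinch: "X \<in> carrier_mat n n \<Longrightarrow> mat_trace (pinch n cl X) = mat_trace X"
  unfolding mat_trace_def pinch_def by simp

lemma orthonormal_mat_sum_same_class:
  fixes f :: "nat \<Rightarrow> real" and cl :: "nat \<Rightarrow> 'c"
  assumes W: "orthonormal_mat n W"
  shows "(\<Sum>k<n. \<Sum>a<n. \<Sum>b<n. if cl a = cl b then (W$$(a,k) * f a) * (W$$(b,k) * f b) else 0) = (\<Sum>a<n. (f a)\<^sup>2)"
proof -
  have "(\<Sum>k<n. \<Sum>a<n. \<Sum>b<n. if cl a = cl b then (W$$(a,k) * f a) * (W$$(b,k) * f b) else 0)
    = (\<Sum>a<n. \<Sum>b<n. if cl a = cl b then f a * f b * (\<Sum>k<n. W$$(a,k) * W$$(b,k)) else 0)"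
    by (subst sum_swap3[symmetric]) (auto simp: sum_distrib_left ac_simps intro!: sum.cong)
  also have "\<dots> = (\<Sum>a<n. \<Sum>b<n. if b = a then f a * f a else 0)"
    using orthonormal_mat_row_sum[OF W] by (intro sum.cong refl) auto
  finally show ?thesis by (simp add: power2_eq_square)
qed

text \<open>The mixing coefficients are the squared norms of the class-wise projections of the eigenvectors.\<close>

lemma pinch_eigenvalues_doubly_stochastic:
  assumes U: "orthonormal_mat n U" and X: "X = U * mat_diag n d * U\<^sup>T"
    and V: "orthonormal_mat n V" and Z: "pinch n cl X = V * mat_diag n z * V\<^sup>T"
  obtains c where "\<And>k j. 0 \<le> c k j"
    and "\<And>k. k < n \<Longrightarrow> (\<Sum>j<n. c k j) = 1" and "\<And>j. j < n \<Longrightarrow> (\<Sum>k<n. c k j) = 1"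
    and "\<And>k. k < n \<Longrightarrow> z k = (\<Sum>j<n. c k j * d j)"
proof -
  define c where "c k j = (\<Sum>a<n. \<Sum>b<n. if cl a = cl b then (V$$(a,k) * U$$(a,j)) * (V$$(b,k) * U$$(b,j)) else 0)"
    for k j
  have "0 \<le> c k j" for k j unfolding c_def by (rule sum_same_class_products_nonneg)
  moreover have "(\<Sum>j<n. c k j) = 1" if k: "k < n" for k
  proof -
    have "(\<Sum>j<n. c k j)
      = (\<Sum>j<n. \<Sum>a<n. \<Sum>b<n. if cl a = cl b then (U$$(a,j) * V$$(a,k)) * (U$$(b,j) * V$$(b,k)) else 0)"
      unfolding c_def by (intro sum.cong refl) (simp add: mult.commute)
    also have "\<dots> = (\<Sum>a<n. (V$$(a,k))\<^sup>2)" by (rule orthonormal_mat_sum_same_class[OF U])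
    finally show ?thesis using orthonormal_mat_col_sum[OF V k k] by (simp add: power2_eq_square)
  qed
  moreover have "(\<Sum>k<n. c k j) = 1" if j: "j < n" for j
    using orthonormal_mat_sum_same_class[OF V, of cl "\<lambda>a. U$$(a,j)"] orthonormal_mat_col_sum[OF U j j]
    unfolding c_def by (simp add: power2_eq_square)
  moreover have "z k = (\<Sum>j<n. c k j * d j)" if k: "k < n" for k
  proof -
    have "z k = (\<Sum>a<n. \<Sum>b<n. V$$(a,k) * pinch n cl X $$ (a,b) * V$$(b,k))"
      by (rule spectral_decomposition_eigenvalue_sum[OF V Z k])
    also have "\<dots> = (\<Sum>a<n. \<Sum>b<n. \<Sum>j<n. if cl a = cl b then d j * ((V$$(a,k) * U$$(a,j)) * (V$$(b,k) * U$$(b,j))) else 0)"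
      using spectral_decomposition_entry[OF U X]
      by (intro sum.cong refl) (auto simp: pinch_def sum_distrib_left sum_distrib_right ac_simps)
    also have "\<dots> = (\<Sum>j<n. c k j * d j)"
      unfolding c_def by (subst sum_swap3) (auto simp: sum_distrib_right intro!: sum.cong)
    finally show ?thesis .
  qed
  ultimately show thesis by (rule that)
qed

lemma pinch_eq_if_sum_sq_le:
  assumes Xc: "X \<in> carrier_mat n n"
    and le: "(\<Sum>a<n. \<Sum>b<n. (X$$(a,b))\<^sup>2) \<le> (\<Sum>a<n. \<Sum>b<n. (pinch n cl X $$ (a,b))\<^sup>2)"
  shows "pinch n cl X = X"
proof -
  have "(\<Sum>a<n. \<Sum>b<n. (X$$(a,b))\<^sup>2) - (\<Sum>a<n. \<Sum>b<n. (pinch n cl X $$ (a,b))\<^sup>2)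
      = (\<Sum>a<n. \<Sum>b<n. if cl a = cl b then 0 else (X$$(a,b))\<^sup>2)"
    by (simp add: sum_subtractf[symmetric] pinch_def) (intro sum.cong refl, auto)
  moreover have "0 \<le> (\<Sum>a<n. \<Sum>b<n. if cl a = cl b then 0 else (X$$(a,b))\<^sup>2)"
    by (intro sum_nonneg) auto
  ultimately have "(\<Sum>a<n. \<Sum>b<n. if cl a = cl b then 0 else (X$$(a,b))\<^sup>2) = 0"
    using le by linarith
  hence zero: "\<forall>a\<in>{..<n}. \<forall>b\<in>{..<n}. (if cl a = cl b then 0 else (X$$(a,b))\<^sup>2) = 0"
    by (subst (asm) sum_nonneg_eq_0_iff; simp add: sum_nonneg sum_nonneg_eq_0_iff)
  have "X$$(a,b) = 0" if "a < n" "b < n" "cl a \<noteq> cl b" for a b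
    using zero[rule_format, of a b] that by simp
  thus ?thesis using Xc by (intro eq_matI) (auto simp: pinch_def)
qed

lemma pinch_eq_if_vn_entropy_le:
  assumes P: "psd n X" and T: "0 < mat_trace X" and S: "vn_entropy X \<le> vn_entropy (pinch n cl X)"
  shows "pinch n cl X = X"
proof -
  have Xc: "X \<in> carrier_mat n n" using P unfolding psd_def by auto
  have trZ: "mat_trace (pinch n cl X) = mat_trace X" by (rule mat_trace_pinch[OF Xc])
  obtain U d where U: "orthonormal_mat n U" and X: "X = U * mat_diag n d * U\<^sup>T"
    and d: "\<forall>j<n. 0 \<le> d j \<and> d j \<le> mat_trace X"
    using psd_spectral_decomposition[OF P] by blast
  obtain V z where V: "orthonormal_mat n V" and Z: "pinch n cl X = V * mat_diag n z * V\<^sup>T"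
    using psd_spectral_decomposition[OF psd_pinch[OF P]] by blast
  obtain c where "\<And>k j. 0 \<le> c k j" "\<And>k. k < n \<Longrightarrow> (\<Sum>j<n. c k j) = 1"
    "\<And>j. j < n \<Longrightarrow> (\<Sum>k<n. c k j) = 1" "\<And>k. k < n \<Longrightarrow> z k = (\<Sum>j<n. c k j * d j)"
    using pinch_eigenvalues_doubly_stochastic[OF U X V Z] by blast
  hence "(\<Sum>k<n. xlnx (z k)) + (1/(2 * mat_trace X)) * (\<Sum>j<n. (d j)\<^sup>2)
      \<le> (\<Sum>j<n. xlnx (d j)) + (1/(2 * mat_trace X)) * (\<Sum>k<n. (z k)\<^sup>2)"
    using d by (intro doubly_stochastic_xlnx_le) auto
  moreover have "(\<Sum>j<n. xlnx (d j)) \<le> (\<Sum>k<n. xlnx (z k))"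
    using S trZ mat_trace_spectral_decomposition[OF U X] mat_trace_spectral_decomposition[OF V Z]
    unfolding vn_entropy_spectral_decomposition[OF U X] vn_entropy_spectral_decomposition[OF V Z]
    by (simp add: sum_subtractf)
  ultimately have "(1/(2 * mat_trace X)) * (\<Sum>j<n. (d j)\<^sup>2) \<le> (1/(2 * mat_trace X)) * (\<Sum>k<n. (z k)\<^sup>2)"
    by linarith
  hence "(\<Sum>j<n. (d j)\<^sup>2) \<le> (\<Sum>k<n. (z k)\<^sup>2)" using T by (simp add: divide_le_cancel)
  hence "(\<Sum>a<n. \<Sum>b<n. (X$$(a,b))\<^sup>2) \<le> (\<Sum>a<n. \<Sum>b<n. (pinch n cl X $$ (a,b))\<^sup>2)"
    unfolding sum_sq_entries_spectral_decomposition[OF U X] sum_sq_entries_spectral_decomposition[OF V Z] .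
  thus ?thesis by (rule pinch_eq_if_sum_sq_le[OF Xc])
qed

definition class_mat :: "nat \<Rightarrow> (nat \<Rightarrow> 'c) \<Rightarrow> real mat" where
  "class_mat n cl = mat n n (\<lambda>(a,b). if cl a = cl b then 1 else 0)"

lemma psd_class_mat: "psd n (class_mat n cl)"
proof -
  have Qc: "class_mat n cl \<in> carrier_mat n n" by (simp add: class_mat_def)
  have "0 \<le> v \<bullet> (class_mat n cl *\<^sub>v v)" if v: "v \<in> carrier_vec n" for v
  proof -
    have "v \<bullet> (class_mat n cl *\<^sub>v v) = (\<Sum>a<n. \<Sum>b<n. if cl a = cl b then v$a * v$b else 0)"
      unfolding quadratic_form_sum[OF v Qc] by (intro sum.cong refl) (auto simp: class_mat_def)
    thus ?thesis using sum_same_class_products_nonneg[of cl "\<lambda>a. v $ a" n] by simp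
  qed
  moreover have "(class_mat n cl)\<^sup>T = class_mat n cl" by (intro eq_matI) (auto simp: class_mat_def)
  ultimately show ?thesis unfolding psd_def using Qc by blast
qed

lemma mat_trace_neg_class_mat_mult:
  assumes "X \<in> carrier_mat n n"
  shows "mat_trace (- class_mat n cl * X) = - (\<Sum>a<n. \<Sum>b<n. if cl a = cl b then X$$(b,a) else 0)"
  unfolding mat_trace_def using assms
  by (simp add: class_mat_def scalar_prod_def atLeast0LessThan sum_negf if_distrib[of "\<lambda>x. x * _"] cong: if_cong)

lemma psd_unit_diag_entry_le_one:
  assumes P: "psd n X" and D: "\<forall>l<n. X$$(l,l) = 1" and a: "a < n" and b: "b < n"
  shows "X$$(a,b) \<le> 1"
proof -
  have Xc: "X \<in> carrier_mat n n" and sym: "X\<^sup>T = X" and nn: "\<forall>v\<in>carrier_vec n. 0 \<le> v \<bullet> (X *\<^sub>v v)"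
    using P unfolding psd_def by auto
  have "X$$(b,a) = X$$(a,b)" using sym Xc a b by (metis carrier_matD index_transpose_mat(1))
  moreover have "0 \<le> (unit_vec n a - unit_vec n b) \<bullet> (X *\<^sub>v (unit_vec n a - unit_vec n b))"
    using nn by simp
  moreover have "(unit_vec n a - unit_vec n b) \<bullet> (X *\<^sub>v (unit_vec n a - unit_vec n b))
      = X$$(a,a) - X$$(a,b) - X$$(b,a) + X$$(b,b)"
    using Xc a b by (simp add: mult_minus_distrib_mat_vec minus_scalar_prod_distrib scalar_prod_minus_distrib carrier_dim_vec)
  ultimately show ?thesis using D a b by simp
qed

lemma minimizer_pinch_eq:
  fixes F :: "real mat \<Rightarrow> bool" and cl :: "nat \<Rightarrow> 'c"
  assumes L: "L > 0" and gw: "\<forall>Y. F Y \<longrightarrow> gw_feasible L Y"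
    and pinch_closed: "\<forall>Y. gw_feasible L Y \<longrightarrow> F (pinch L cl Y)"
    and min: "is_minimizer F (reg_objective (- class_mat L cl) \<beta>) X" and \<beta>: "\<beta> > 0"
  shows "pinch L cl X = X"
proof (rule pinch_eq_if_vn_entropy_le)
  have FX: "F X" using min unfolding is_minimizer_def by auto
  show P: "psd L X" and "0 < mat_trace X" using gw FX L unfolding gw_feasible_def mat_trace_def psd_def by auto
  have Xc: "X \<in> carrier_mat L L" using P unfolding psd_def by auto
  \<comment> \<open>the linear term only sees the entries that the pinching keeps\<close>
  have "mat_trace (- class_mat L cl * pinch L cl X) = mat_trace (- class_mat L cl * X)"
    unfolding mat_trace_neg_class_mat_mult[OF Xc]
    by (subst mat_trace_neg_class_mat_mult) (auto simp: pinch_def intro!: sum.cong)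
  moreover have "reg_objective (- class_mat L cl) \<beta> X \<le> reg_objective (- class_mat L cl) \<beta> (pinch L cl X)"
    using min pinch_closed gw FX unfolding is_minimizer_def by auto
  ultimately show "vn_entropy X \<le> vn_entropy (pinch L cl X)"
    using \<beta> unfolding reg_objective_def by (simp add: divide_le_cancel)
qed

lemma minimizer_same_class_entry_bounds:
  fixes F :: "real mat \<Rightarrow> bool" and cl :: "nat \<Rightarrow> 'c"
  assumes FQ: "F (class_mat L cl)" and gw: "\<forall>Y. F Y \<longrightarrow> gw_feasible L Y"
    and min: "is_minimizer F (reg_objective (- class_mat L cl) \<beta>) X" and \<beta>: "\<beta> > 0"
    and a: "a < L" and b: "b < L" and ab: "cl a = cl b"
  shows "1 - (vn_entropy (class_mat L cl) + real L) / \<beta> \<le> X$$(a,b) \<and> X$$(a,b) \<le> 1"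
proof -
  let ?Q = "class_mat L cl" and ?gap = "\<lambda>i j. if cl i = cl j then 1 - X$$(j,i) else 0"
  have FX: "F X" using min unfolding is_minimizer_def by auto
  have P: "psd L X" and D: "\<forall>l<L. X$$(l,l) = 1" using gw FX unfolding gw_feasible_def by auto
  have Xc: "X \<in> carrier_mat L L" using P unfolding psd_def by auto
  have le1: "X$$(r,s) \<le> 1" if "r < L" "s < L" for r s using psd_unit_diag_entry_le_one[OF P D that] .
  \<comment> \<open>compare with the feasible point \<open>Q\<close>, using \<open>S(X) \<ge> -L\<close>\<close>
  have "reg_objective (- ?Q) \<beta> X \<le> reg_objective (- ?Q) \<beta> ?Q" using min FQ unfolding is_minimizer_def by auto
  moreover have "mat_trace (- ?Q * X) - mat_trace (- ?Q * ?Q) = (\<Sum>i<L. \<Sum>j<L. ?gap i j)"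
    unfolding mat_trace_neg_class_mat_mult[OF Xc]
    by (subst mat_trace_neg_class_mat_mult) (auto simp: class_mat_def sum_subtractf[symmetric] intro!: sum.cong)
  moreover have "(1/\<beta>) * (- real L) \<le> (1/\<beta>) * vn_entropy X"
    using vn_entropy_psd_ge[OF P] \<beta> by (intro mult_left_mono) auto
  ultimately have B: "(\<Sum>i<L. \<Sum>j<L. ?gap i j) \<le> (vn_entropy ?Q + real L) / \<beta>"
    unfolding reg_objective_def by (simp add: algebra_simps add_divide_distrib)
  have nn: "0 \<le> ?gap i j" if "i < L" "j < L" for i j using le1 that by auto
  have "?gap b a \<le> (\<Sum>j<L. ?gap b j)" using a b nn by (intro member_le_sum) auto
  also have "\<dots> \<le> (\<Sum>i<L. \<Sum>j<L. ?gap i j)"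
    using b nn by (intro member_le_sum[of b _ "\<lambda>i. \<Sum>j<L. ?gap i j"] sum_nonneg) auto
  finally show ?thesis using B ab le1[OF a b] by simp
qed

lemma minimizer_tendsto_class_mat:
  fixes F :: "real mat \<Rightarrow> bool" and cl :: "nat \<Rightarrow> 'c" and X :: "real \<Rightarrow> real mat"
  assumes L: "L > 0" and FQ: "F (class_mat L cl)" and gw: "\<forall>Y. F Y \<longrightarrow> gw_feasible L Y"
    and pinch_closed: "\<forall>Y. gw_feasible L Y \<longrightarrow> F (pinch L cl Y)"
    and min: "\<forall>\<beta>>0. is_minimizer F (reg_objective (- class_mat L cl) \<beta>) (X \<beta>)"
  shows "mat_tendsto_at_top X (class_mat L cl)"
proof -
  define C where "C = vn_entropy (class_mat L cl) + real L"
  have carrier: "\<forall>\<^sub>F \<beta> in at_top. X \<beta> \<in> carrier_mat L L"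
  proof (rule eventually_mono[OF eventually_gt_at_top[of 0]])
    fix \<beta> :: real assume "0 < \<beta>"
    hence "F (X \<beta>)" using min unfolding is_minimizer_def by auto
    thus "X \<beta> \<in> carrier_mat L L" using gw unfolding gw_feasible_def psd_def by auto
  qed
  have "((\<lambda>\<beta>. X \<beta> $$ (r,s)) \<longlongrightarrow> class_mat L cl $$ (r,s)) at_top" if r: "r < L" and s: "s < L" for r s
  proof (cases "cl r = cl s")
    case True
    note bounds = minimizer_same_class_entry_bounds[OF FQ gw _ _ r s True]
    have lower: "\<forall>\<^sub>F \<beta> in at_top. 1 - C / \<beta> \<le> X \<beta> $$ (r,s)"
      using eventually_gt_at_top[of 0] by eventually_elim (use bounds min in \<open>auto simp: C_def\<close>)
    have upper: "\<forall>\<^sub>F \<beta> in at_top. X \<beta> $$ (r,s) \<le> 1"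
      using eventually_gt_at_top[of 0] by eventually_elim (use bounds min in auto)
    have "((\<lambda>\<beta>::real. C / \<beta>) \<longlongrightarrow> 0) at_top"
      by (rule tendsto_divide_0[OF tendsto_const filterlim_at_top_imp_at_infinity[OF filterlim_ident]])
    hence "((\<lambda>\<beta>::real. 1 - C / \<beta>) \<longlongrightarrow> 1 - 0) at_top" by (intro tendsto_diff tendsto_const)
    hence "((\<lambda>\<beta>::real. 1 - C / \<beta>) \<longlongrightarrow> 1) at_top" by simp
    hence "((\<lambda>\<beta>. X \<beta> $$ (r,s)) \<longlongrightarrow> 1) at_top"
      by (rule tendsto_sandwich[OF lower upper _ tendsto_const])
    thus ?thesis using r s True by (simp add: class_mat_def)
  next
    case False
    have "X \<beta> $$ (r,s) = 0" if "\<beta> > 0" for \<beta>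
    proof -
      have "pinch L cl (X \<beta>) = X \<beta>"
        using min that by (intro minimizer_pinch_eq[OF L gw pinch_closed]) auto
      hence "X \<beta> $$ (r,s) = pinch L cl (X \<beta>) $$ (r,s)" by simp
      thus ?thesis using r s False by (simp add: pinch_def)
    qed
    hence "\<forall>\<^sub>F \<beta> in at_top. X \<beta> $$ (r,s) = 0" by (rule eventually_mono[OF eventually_gt_at_top[of 0]])
    hence "((\<lambda>\<beta>. X \<beta> $$ (r,s)) \<longlongrightarrow> 0) at_top" by (rule tendsto_eventually)
    thus ?thesis using r s False by (simp add: class_mat_def)
  qed
  with carrier show ?thesis unfolding mat_tendsto_at_top_def by (simp add: class_mat_def)
qed

lemma blk_off_Suc: "blk_off K (Suc i) = blk_off K i + K i"
  unfolding blk_off_def by simp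

lemma blk_off_add_less:
  assumes "i < n" and "a < K i"
  shows "blk_off K i + a < (\<Sum>i<n. K i)"
proof -
  have "blk_off K i + a < blk_off K (Suc i)" using assms by (simp add: blk_off_Suc)
  also have "\<dots> \<le> blk_off K n" using assms unfolding blk_off_def by (intro sum_mono2) auto
  finally show ?thesis unfolding blk_off_def .
qed

lemma blk_off_cases:
  assumes "r < (\<Sum>i<n. K i)"
  obtains i a where "i < n" and "a < K i" and "r = blk_off K i + a"
  using assms
proof (induction n)
  case (Suc n)
  show ?case
  proof (cases "r < (\<Sum>i<n. K i)")
    case True thus ?thesis using Suc.IH Suc.prems(1) less_SucI by blast
  next
    case False
    hence "r - blk_off K n < K n" and "r = blk_off K n + (r - blk_off K n)"
      using Suc.prems(2) unfolding blk_off_def by auto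
    thus ?thesis using Suc.prems(1) by blast
  qed
qed simp

lemma stack_mats_carrier:
  "\<forall>i<n. Ps i \<in> carrier_mat (K i) M \<Longrightarrow> stack_mats Ps M n \<in> carrier_mat (\<Sum>i<n. K i) M"
  by (induction n) auto

lemma stack_mats_index:
  assumes "\<forall>i<n. Ps i \<in> carrier_mat (K i) M" and "i < n" and "a < K i" and "c < M"
  shows "stack_mats Ps M n $$ (blk_off K i + a, c) = Ps i $$ (a, c)"
  using assms
proof (induction n)
  case (Suc n)
  have S: "stack_mats Ps M n \<in> carrier_mat (\<Sum>i<n. K i) M" using Suc.prems(1) by (intro stack_mats_carrier) auto
  have Pn: "Ps n \<in> carrier_mat (K n) M" using Suc.prems(1) by auto
  have "stack_mats Ps M (Suc n) $$ (blk_off K i + a, c)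
     = (if blk_off K i + a < (\<Sum>i<n. K i) then stack_mats Ps M n $$ (blk_off K i + a, c)
        else Ps n $$ (blk_off K i + a - (\<Sum>i<n. K i), c))"
    using S Pn Suc.prems blk_off_add_less[where i = i and n = "Suc n" and K = K and a = a]
    unfolding stack_mats.simps append_rows_def by (subst index_mat_four_block) auto
  thus ?case using Suc blk_off_add_less[where i = i and n = n and K = K and a = a] unfolding blk_off_def
    by (cases "i < n") (auto simp: less_Suc_eq)
qed simp

definition one_pos :: "real mat \<Rightarrow> nat \<Rightarrow> nat" where
  "one_pos P r = (THE c. c < dim_col P \<and> P $$ (r,c) = 1)"

lemma one_pos:
  assumes P: "P \<in> carrier_mat L M" and ex1: "\<exists>!c. c < M \<and> P $$ (r,c) = 1"
  shows "one_pos P r < M" and "P $$ (r, one_pos P r) = 1"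
    and "\<And>c. c < M \<Longrightarrow> P $$ (r,c) = 1 \<Longrightarrow> c = one_pos P r"
proof -
  have pos: "one_pos P r = (THE c. c < M \<and> P $$ (r,c) = 1)" unfolding one_pos_def using P by simp
  show "one_pos P r < M" and "P $$ (r, one_pos P r) = 1" unfolding pos using theI'[OF ex1] by auto
  show "c = one_pos P r" if "c < M" and "P $$ (r,c) = 1" for c
    unfolding pos using the1_equality[OF ex1, of c] that by simp
qed

lemma gram_one_hot_rows:
  assumes P: "P \<in> carrier_mat L M"
    and bin: "\<And>r c. r < L \<Longrightarrow> c < M \<Longrightarrow> P $$ (r,c) = 0 \<or> P $$ (r,c) = 1"
    and one: "\<And>r. r < L \<Longrightarrow> \<exists>!c. c < M \<and> P $$ (r,c) = 1"
  shows "P * P\<^sup>T = class_mat L (one_pos P)"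
proof (rule eq_matI)
  have Pe: "P $$ (r,c) = (if c = one_pos P r then 1 else 0)" if r: "r < L" and c: "c < M" for r c
  proof (cases "c = one_pos P r")
    case False
    hence "P $$ (r,c) \<noteq> 1" using one_pos(3)[OF P one[OF r] c] by auto
    thus ?thesis using bin[OF r c] False by auto
  qed (use one_pos(2)[OF P one[OF r]] in simp)
  fix r s assume "r < dim_row (class_mat L (one_pos P))" "s < dim_col (class_mat L (one_pos P))"
  hence r: "r < L" and s: "s < L" by (auto simp: class_mat_def)
  have "(P * P\<^sup>T) $$ (r,s) = (\<Sum>c<M. P $$ (r,c) * P $$ (s,c))"
    using P r s by (simp add: scalar_prod_def atLeast0LessThan)
  also have "\<dots> = (\<Sum>c<M. if c = one_pos P r then (if one_pos P s = one_pos P r then 1 else 0) else 0)"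
    using r s by (intro sum.cong refl) (simp add: Pe)
  finally show "(P * P\<^sup>T) $$ (r,s) = class_mat L (one_pos P) $$ (r,s)"
    using one_pos(1)[OF P one[OF r]] r s by (simp add: class_mat_def)
qed (use P in \<open>auto simp: class_mat_def\<close>)

lemma stack_gram_class_mat:
  assumes Ps: "\<forall>i<N. Ps i \<in> carrier_mat (K i) M \<and> row_partial_perm (Ps i)"
  shows "\<exists>cl :: nat \<Rightarrow> nat. stack_mats Ps M N * (stack_mats Ps M N)\<^sup>T = class_mat (\<Sum>i<N. K i) cl
    \<and> (\<forall>i<N. \<forall>a<K i. \<forall>b<K i. cl (blk_off K i + a) = cl (blk_off K i + b) \<longrightarrow> a = b)"
proof -
  define P where "P = stack_mats Ps M N"
  define L where "L = (\<Sum>i<N. K i)"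
  have P: "P \<in> carrier_mat L M" unfolding P_def L_def using Ps by (intro stack_mats_carrier) auto
  have Pidx: "P $$ (blk_off K i + a, c) = Ps i $$ (a, c)" if "i < N" "a < K i" "c < M" for i a c
    unfolding P_def using Ps that by (intro stack_mats_index) auto
  have rpp: "(\<forall>c<M. Ps i $$ (a,c) = 0 \<or> Ps i $$ (a,c) = 1) \<and> (\<exists>!c. c < M \<and> Ps i $$ (a,c) = 1)
      \<and> (\<forall>c<M. \<forall>b<K i. Ps i $$ (a,c) = 1 \<longrightarrow> Ps i $$ (b,c) = 1 \<longrightarrow> a = b)" if "i < N" "a < K i" for i a
  proof -
    have "Ps i \<in> carrier_mat (K i) M" and "row_partial_perm (Ps i)" using Ps that(1) by auto
    thus ?thesis using that(2) unfolding row_partial_perm_def carrier_mat_def by auto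
  qed
  have rows: "(\<forall>c<M. P $$ (r,c) = 0 \<or> P $$ (r,c) = 1) \<and> (\<exists>!c. c < M \<and> P $$ (r,c) = 1)" if r_lt: "r < L" for r
  proof -
    obtain i a where i: "i < N" and a: "a < K i" and r: "r = blk_off K i + a"
      using blk_off_cases[OF r_lt[unfolded L_def]] by blast
    have Pr: "P $$ (r,c) = Ps i $$ (a,c)" if "c < M" for c using Pidx[OF i a that] r by simp
    hence "c < M \<and> P $$ (r,c) = 1 \<longleftrightarrow> c < M \<and> Ps i $$ (a,c) = 1" for c by auto
    thus ?thesis using rpp[OF i a] Pr by simp
  qed
  have gram: "P * P\<^sup>T = class_mat L (one_pos P)" using rows by (intro gram_one_hot_rows[OF P]) auto
  have "a = b" if i: "i < N" and a: "a < K i" and b: "b < K i"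
    and eq: "one_pos P (blk_off K i + a) = one_pos P (blk_off K i + b)" for i a b
  proof -
    have ra: "blk_off K i + a < L" and rb: "blk_off K i + b < L" unfolding L_def using i a b blk_off_add_less by auto
    define c where "c = one_pos P (blk_off K i + a)"
    have c: "c < M" "Ps i $$ (a,c) = 1" using one_pos(1,2)[OF P conjunct2[OF rows[OF ra]]] Pidx[OF i a] unfolding c_def by auto
    have "Ps i $$ (b,c) = 1" using one_pos(1,2)[OF P conjunct2[OF rows[OF rb]]] Pidx[OF i b] eq unfolding c_def by auto
    thus ?thesis using rpp[OF i a] c b by blast
  qed
  thus ?thesis using gram unfolding P_def L_def by blast
qed

lemma class_structured_feasible:
  fixes cl :: "nat \<Rightarrow> 'c"
  assumes P: "psd L Y" and D: "\<forall>l<L. Y$$(l,l) = 1"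
    and Z: "\<forall>a<L. \<forall>b<L. cl a \<noteq> cl b \<longrightarrow> Y$$(a,b) = 0"
    and blocks: "(\<forall>i<N. \<forall>a<K i. \<forall>b<K i. cl (blk_off K i + a) = cl (blk_off K i + b) \<longrightarrow> a = b)"
    and K: "\<forall>i<N. K i > 0" and L: "L = (\<Sum>i<N. K i)"
  shows "strong_feasible N K L Y \<and> weak_feasible N K L Y \<and> gw_feasible L Y"
proof -
  have db: "diag_block Y K i = 1\<^sub>m (K i)" if i: "i < N" for i
  proof (rule eq_matI)
    fix a b assume "a < dim_row (1\<^sub>m (K i))" "b < dim_col (1\<^sub>m (K i))"
    hence a: "a < K i" and b: "b < K i" by auto
    have ra: "blk_off K i + a < L" and rb: "blk_off K i + b < L" unfolding L using blk_off_add_less i a b by auto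
    show "diag_block Y K i $$ (a,b) = 1\<^sub>m (K i) $$ (a,b)"
    proof (cases "a = b")
      case False
      hence "cl (blk_off K i + a) \<noteq> cl (blk_off K i + b)" using blocks i a b by blast
      thus ?thesis using Z ra rb False a b unfolding diag_block_def by auto
    qed (use D ra a in \<open>auto simp: diag_block_def\<close>)
  qed (auto simp: diag_block_def)
  have "mat_trace (diag_block Y K i * ((1 / real (K i)) \<cdot>\<^sub>m mat (K i) (K i) (\<lambda>_. 1))) = 1"
    if i: "i < N" for i
    using K i unfolding db[OF i] mat_trace_def by simp
  thus ?thesis using P D db unfolding strong_feasible_def weak_feasible_def gw_feasible_def by auto
qed

lemma strong_feasible_imp_gw_feasible:
  assumes S: "strong_feasible N K L X" and L: "L = (\<Sum>i<N. K i)"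
  shows "gw_feasible L X"
proof -
  have "X$$(l,l) = 1" if l: "l < L" for l
  proof -
    obtain i a where i: "i < N" and a: "a < K i" and la: "l = blk_off K i + a"
      using blk_off_cases[OF l[unfolded L]] by blast
    have "diag_block X K i $$ (a,a) = 1\<^sub>m (K i) $$ (a,a)" using S i unfolding strong_feasible_def by simp
    thus ?thesis using a la unfolding diag_block_def by simp
  qed
  thus ?thesis using S unfolding strong_feasible_def gw_feasible_def by auto
qed

lemma weak_feasible_imp_gw_feasible: "weak_feasible N K L X \<Longrightarrow> gw_feasible L X"
  unfolding weak_feasible_def gw_feasible_def by auto

lemma feasible_set_properties:
  fixes cl :: "nat \<Rightarrow> 'c"
  assumes F: "F \<in> {strong_feasible N K L, weak_feasible N K L, gw_feasible L}"
    and blocks: "\<forall>i<N. \<forall>a<K i. \<forall>b<K i. cl (blk_off K i + a) = cl (blk_off K i + b) \<longrightarrow> a = b"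
    and K: "\<forall>i<N. K i > 0" and L: "L = (\<Sum>i<N. K i)"
  shows "F (class_mat L cl)" and "\<forall>Y. F Y \<longrightarrow> gw_feasible L Y"
    and "\<forall>Y. gw_feasible L Y \<longrightarrow> F (pinch L cl Y)"
proof -
  note feasible = class_structured_feasible[OF _ _ _ blocks K L]
  have "strong_feasible N K L (class_mat L cl) \<and> weak_feasible N K L (class_mat L cl)
      \<and> gw_feasible L (class_mat L cl)"
    using feasible[OF psd_class_mat[of L cl]] by (auto simp: class_mat_def)
  thus "F (class_mat L cl)" using F by auto
  show "\<forall>Y. F Y \<longrightarrow> gw_feasible L Y"
    using F strong_feasible_imp_gw_feasible[OF _ L] weak_feasible_imp_gw_feasible by auto
  have "strong_feasible N K L (pinch L cl Y) \<and> weak_feasible N K L (pinch L cl Y) \<and> gw_feasible L (pinch L cl Y)"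
    if "gw_feasible L Y" for Y
  proof -
    have "psd L Y" and "\<forall>l<L. Y$$(l,l) = 1" using that unfolding gw_feasible_def by auto
    thus ?thesis using psd_pinch[of L Y cl] by (intro feasible) (auto simp: pinch_def)
  qed
  thus "\<forall>Y. gw_feasible L Y \<longrightarrow> F (pinch L cl Y)" using F by auto
qed

theorem theorem2:
  fixes N M :: nat and K :: "nat \<Rightarrow> nat" and Ps :: "nat \<Rightarrow> real mat"
    and Xs Xw Xg :: "real \<Rightarrow> real mat"
  assumes "N \<ge> 1" and "M \<ge> 1"
    and "\<forall>i<N. K i > 0"
    and "\<forall>i<N. Ps i \<in> carrier_mat (K i) M \<and> row_partial_perm (Ps i)"
  defines "L \<equiv> (\<Sum>i<N. K i)"
    and "Q \<equiv> stack_mats Ps M N * transpose_mat (stack_mats Ps M N)"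
  shows "((\<forall>\<beta>>0. is_minimizer (strong_feasible N K L) (reg_objective (- Q) \<beta>) (Xs \<beta>))
            \<longrightarrow> mat_tendsto_at_top Xs Q)
       \<and> ((\<forall>\<beta>>0. is_minimizer (weak_feasible N K L) (reg_objective (- Q) \<beta>) (Xw \<beta>))
            \<longrightarrow> mat_tendsto_at_top Xw Q)
       \<and> ((\<forall>\<beta>>0. is_minimizer (gw_feasible L) (reg_objective (- Q) \<beta>) (Xg \<beta>))
            \<longrightarrow> mat_tendsto_at_top Xg Q)"
proof -
  obtain cl :: "nat \<Rightarrow> nat" where gram: "stack_mats Ps M N * (stack_mats Ps M N)\<^sup>T = class_mat (\<Sum>i<N. K i) cl"
    and blocks: "\<forall>i<N. \<forall>a<K i. \<forall>b<K i. cl (blk_off K i + a) = cl (blk_off K i + b) \<longrightarrow> a = b"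
    using stack_gram_class_mat[OF assms(4)] by blast
  have Q: "Q = class_mat L cl" unfolding Q_def L_def by (rule gram)
  have L: "L > 0" using assms(1,3) member_le_sum[of 0 "{..<N}" K] unfolding L_def by fastforce
  have "mat_tendsto_at_top X (class_mat L cl)"
    if "F \<in> {strong_feasible N K L, weak_feasible N K L, gw_feasible L}"
      and "\<forall>\<beta>>0. is_minimizer F (reg_objective (- class_mat L cl) \<beta>) (X \<beta>)" for F X
    using feasible_set_properties[OF that(1) blocks assms(3) meta_eq_to_obj_eq[OF L_def]] that(2)
    by (intro minimizer_tendsto_class_mat[OF L])
  from this[of "strong_feasible N K L" Xs] this[of "weak_feasible N K L" Xw] this[of "gw_feasible L" Xg]
  show ?thesis unfolding Q by simp
qed

end
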